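(* For all integers $n\geq 0$, $i\geq 1$ and $\alpha\geq 0$, $\bar a_{2i}\big(2^\alpha(4n+3)\big)\equiv 0 \pmod 4$.
   Context: For an integer $k\geq 1$ let $f_k:=\prod_{n\geq 1}(1-q^{kn})$. For an integer $c\geq1$, the generalized overcubic partition function $\bar a_c(n)$ is defined by the generating function $\sum_{n\geq 0}\bar a_c(n)q^n=\dfrac{f_4^{c-1}}{f_1^2f_2^{2c-3}}$. *)

theory Defs
  imports "HOL-Computational_Algebra.Formal_Power_Series"
begin

text \<open>f_k = prod_{m>=1} (1 - q^(k m)) as a formal power series over the rationals.
  Since k >= 1, the coefficient of q^n only depends on the factors with m <= n,
  so we take the n-th coefficient of the finite product over m in {1..n}.\<close>
definition eta_f :: "nat \<Rightarrow> rat fps" where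
  "eta_f k = Abs_fps (\<lambda>n. fps_nth (\<Prod>m\<in>{1..n}. (1 - fps_X ^ (k * m))) n)"

text \<open>Generating function f_4^(c-1) / (f_1^2 f_2^(2c-3)); for c = 1 the exponent
  2c-3 = -1 is negative, giving f_2 / f_1^2.\<close>
definition overcubic_gf :: "nat \<Rightarrow> rat fps" where
  "overcubic_gf c =
     (if c \<ge> 2 then eta_f 4 ^ (c - 1) * inverse (eta_f 1 ^ 2 * eta_f 2 ^ (2 * c - 3))
      else eta_f 4 ^ (c - 1) * eta_f 2 * inverse (eta_f 1 ^ 2))"

definition abar :: "nat \<Rightarrow> nat \<Rightarrow> rat" where
  "abar c n = fps_nth (overcubic_gf c) n"

end

(*
  Write f_k for eta_f k, d(n) for the number of divisors of n and phi = 1 - 2 sum d(n) q^n.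
  Factor by factor, (1 - x)^2 = (1 - x^2)(1 - 2x/(1 - x)) + 4x^2, and
  sum_m q^m/(1 - q^m) = sum d(n) q^n; hence f_1^2 == f_2 phi(q) modulo 4, and substituting
  q^2 for q gives f_2^2 == f_4 phi(q^2).  As phi^2 == 1 modulo 4, the generating function
  f_4^(2i-1) / (f_1^2 f_2^(4i-3)) is congruent to
  1 / (phi(q) phi(q^2)) == phi(q) phi(q^2) == 1 - 2 sum (d(n) + d(n/2)) q^n.
  Since d(n) is odd exactly when n is a square, abar_(2i)(N) is divisible by 4 whenever
  neither N nor N/2 is a square, which holds for N = 2^alpha (4n + 3) because the odd part
  of N is 3 modulo 4.
*)
theory Submission
  imports Defs
begin

definition int_fps :: "'a::ring_1 fps \<Rightarrow> bool" where
  "int_fps A \<longleftrightarrow> (\<forall>n. fps_nth A n \<in> \<int>)"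

definition fps_cong :: "'a::ring_1 \<Rightarrow> 'a fps \<Rightarrow> 'a fps \<Rightarrow> bool" where
  "fps_cong m A B \<longleftrightarrow> (\<exists>Y. int_fps Y \<and> A - B = fps_const m * Y)"

lemma fps_congI: "int_fps Y \<Longrightarrow> A - B = fps_const m * Y \<Longrightarrow> fps_cong m A B"
  unfolding fps_cong_def by blast

lemma int_fps_0 [simp]: "int_fps 0"
  and int_fps_1 [simp]: "int_fps 1"
  and int_fps_numeral [simp]: "int_fps (numeral k)"
  and int_fps_X_power [simp]: "int_fps (fps_X ^ j)"
  by (simp_all add: int_fps_def fps_numeral_nth)

lemma int_fps_add [simp]: "int_fps A \<Longrightarrow> int_fps B \<Longrightarrow> int_fps (A + B)"
  and int_fps_diff [simp]: "int_fps A \<Longrightarrow> int_fps B \<Longrightarrow> int_fps (A - B)"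
  and int_fps_uminus [simp]: "int_fps A \<Longrightarrow> int_fps (- A)"
  by (simp_all add: int_fps_def)

lemma int_fps_mult [simp]: "int_fps A \<Longrightarrow> int_fps B \<Longrightarrow> int_fps (A * B)"
  for A B :: "'a::comm_ring_1 fps"
  unfolding int_fps_def fps_mult_nth by (auto intro!: Ints_mult)

lemma int_fps_power [simp]: "int_fps A \<Longrightarrow> int_fps (A ^ k)"
  for A :: "'a::comm_ring_1 fps"
  by (induction k) auto

lemma int_fps_prod: "(\<And>x. x \<in> S \<Longrightarrow> int_fps (f x)) \<Longrightarrow> int_fps (\<Prod>x\<in>S. f x)"
  for f :: "'b \<Rightarrow> 'a::comm_ring_1 fps"
  by (induction S rule: infinite_finite_induct) auto

lemma int_fps_sum: "(\<And>x. x \<in> S \<Longrightarrow> int_fps (f x)) \<Longrightarrow> int_fps (\<Sum>x\<in>S. f x)"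
  by (induction S rule: infinite_finite_induct) auto

lemma int_fps_inverse:
  fixes A :: "'a::field fps"
  assumes "int_fps A" "fps_nth A 0 = 1"
  shows "int_fps (inverse A)"
  unfolding int_fps_def
proof
  fix n show "fps_nth (inverse A) n \<in> \<int>"
  proof (induction n rule: less_induct)
    case (less n)
    show ?case
    proof (cases n)
      case (Suc k)
      have "fps_nth (inverse A) n = - (\<Sum>i=1..n. fps_nth A i * fps_nth (inverse A) (n - i))"
        using assms(2) by (simp add: Suc fps_inverse_def)
      also have "\<dots> \<in> \<int>"
        by (intro Ints_minus Ints_sum Ints_mult) (use assms(1) less Suc in \<open>auto simp: int_fps_def\<close>)
      finally show ?thesis .
    qed (use assms in simp)
  qed
qed

lemma fps_cong_refl [simp]: "fps_cong m A A"
  unfolding fps_cong_def by (rule exI[of _ 0]) simp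

lemma fps_cong_sym: "fps_cong m A B \<Longrightarrow> fps_cong m B A"
  unfolding fps_cong_def by (metis int_fps_uminus minus_diff_eq mult_minus_right)

lemma fps_cong_trans [trans]: "fps_cong m A B \<Longrightarrow> fps_cong m B C \<Longrightarrow> fps_cong m A C"
  unfolding fps_cong_def
proof (elim exE conjE)
  fix Y Z assume "int_fps Y" "A - B = fps_const m * Y" "int_fps Z" "B - C = fps_const m * Z"
  then show "\<exists>W. int_fps W \<and> A - C = fps_const m * W"
    by (intro exI[of _ "Y + Z"]) (auto simp: algebra_simps dest: sym)
qed

lemma fps_cong_mult_left: "int_fps C \<Longrightarrow> fps_cong m A B \<Longrightarrow> fps_cong m (C * A) (C * B)"
  for A B C :: "'a::comm_ring_1 fps"
  unfolding fps_cong_def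
proof (elim exE conjE)
  fix Y assume "int_fps C" "int_fps Y" "A - B = fps_const m * Y"
  then show "\<exists>W. int_fps W \<and> C * A - C * B = fps_const m * W"
    by (intro exI[of _ "C * Y"]) (auto simp: algebra_simps simp flip: right_diff_distrib)
qed

lemma fps_cong_mult:
  fixes A B C D :: "'a::comm_ring_1 fps"
  assumes "fps_cong m A B" "fps_cong m C D" "int_fps B" "int_fps C"
  shows "fps_cong m (A * C) (B * D)"
proof -
  have "fps_cong m (C * A) (C * B)" "fps_cong m (B * C) (B * D)"
    using assms by (simp_all add: fps_cong_mult_left)
  then show ?thesis by (simp add: fps_cong_trans mult.commute)
qed

lemma fps_cong_power:
  "fps_cong m A B \<Longrightarrow> int_fps A \<Longrightarrow> int_fps B \<Longrightarrow> fps_cong m (A ^ k) (B ^ k)"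
  for A B :: "'a::comm_ring_1 fps"
  by (induction k) (auto intro: fps_cong_mult)

lemma fps_cong_prod:
  fixes f g :: "'b \<Rightarrow> 'a::comm_ring_1 fps"
  assumes "\<And>x. x \<in> S \<Longrightarrow> fps_cong m (f x) (g x)" "\<And>x. x \<in> S \<Longrightarrow> int_fps (f x)"
    "\<And>x. x \<in> S \<Longrightarrow> int_fps (g x)"
  shows "fps_cong m (\<Prod>x\<in>S. f x) (\<Prod>x\<in>S. g x)"
  using assms by (induction S rule: infinite_finite_induct) (auto intro!: fps_cong_mult int_fps_prod)

lemma fps_cong_inverse:
  fixes A B :: "'a::field fps"
  assumes "fps_cong m A B" "int_fps A" "int_fps B" "fps_nth A 0 = 1" "fps_nth B 0 = 1"
  shows "fps_cong m (inverse A) (inverse B)"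
proof -
  have "inverse A * A = 1" "inverse B * B = 1"
    using assms(4,5) by (simp_all add: inverse_mult_eq_1)
  then have "inverse A - inverse B = (inverse A * inverse B) * B - (inverse A * inverse B) * A"
    by (simp add: mult.assoc mult.commute[of "inverse A" "inverse B"])
  moreover have "fps_cong m ((inverse A * inverse B) * B) ((inverse A * inverse B) * A)"
    using assms by (intro fps_cong_mult_left fps_cong_sym[OF assms(1)]) (simp_all add: int_fps_inverse)
  ultimately show ?thesis
    by (simp add: fps_cong_def)
qed

lemma fps_cong_nth: "fps_cong m A B \<Longrightarrow> \<exists>z\<in>\<int>. fps_nth A n - fps_nth B n = m * z"
  unfolding fps_cong_def int_fps_def
proof (elim exE conjE)
  fix Y assume "\<forall>n. fps_nth Y n \<in> \<int>" "A - B = fps_const m * Y"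
  then show "\<exists>z\<in>\<int>. fps_nth A n - fps_nth B n = m * z"
    by (metis fps_sub_nth fps_mult_left_const_nth)
qed

definition fps_agree_upto :: "nat \<Rightarrow> 'a fps \<Rightarrow> 'a fps \<Rightarrow> bool" where
  "fps_agree_upto n A B \<longleftrightarrow> (\<forall>j\<le>n. fps_nth A j = fps_nth B j)"

lemma fps_agree_upto_refl [simp]: "fps_agree_upto n A A"
  by (simp add: fps_agree_upto_def)

lemma fps_agree_upto_mult:
  "fps_agree_upto n A B \<Longrightarrow> fps_agree_upto n C D \<Longrightarrow> fps_agree_upto n (A * C) (B * D)"
  unfolding fps_agree_upto_def fps_mult_nth by (auto intro!: sum.cong)

lemma fps_agree_upto_diff:
  "fps_agree_upto n A B \<Longrightarrow> fps_agree_upto n C D \<Longrightarrow> fps_agree_upto n (A - C) (B - D)"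
  unfolding fps_agree_upto_def by simp

lemma fps_agree_upto_power: "fps_agree_upto n A B \<Longrightarrow> fps_agree_upto n (A ^ k) (B ^ k)"
  for A B :: "'a::comm_ring_1 fps"
  by (induction k) (simp_all add: fps_agree_upto_mult)

lemma fps_cong_if_truncations_cong:
  assumes "\<And>n. \<exists>A' B'. fps_agree_upto n A A' \<and> fps_agree_upto n B B' \<and> fps_cong m A' B'"
  shows "fps_cong m A B"
proof -
  have "\<forall>n. \<exists>z\<in>\<int>. fps_nth A n - fps_nth B n = m * z"
  proof
    fix n
    obtain A' B' where "fps_agree_upto n A A'" "fps_agree_upto n B B'" "fps_cong m A' B'"
      using assms by blast
    then show "\<exists>z\<in>\<int>. fps_nth A n - fps_nth B n = m * z"
      using fps_cong_nth[of m A' B' n] by (auto simp: fps_agree_upto_def)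
  qed
  then obtain z where "\<And>n. z n \<in> \<int>" "\<And>n. fps_nth A n - fps_nth B n = m * z n"
    by metis
  then show ?thesis
    by (intro fps_congI[of "Abs_fps z"]) (auto simp: int_fps_def fps_eq_iff)
qed

lemma fps_cong_inverse_self:
  fixes U :: "'a::field fps"
  assumes "int_fps U" "fps_nth U 0 = 1" "fps_cong m (U * U) 1"
  shows "fps_cong m (inverse U) U"
proof -
  have "fps_cong m (inverse U * 1) (inverse U * (U * U))"
    using assms by (intro fps_cong_mult_left fps_cong_sym[OF assms(3)]) (simp_all add: int_fps_inverse)
  moreover have "inverse U * (U * U) = U"
    using assms(2) by (simp add: inverse_mult_eq_1 flip: mult.assoc)
  ultimately show ?thesis by simp
qed

lemma fps_cong_mult_one_minus_two:
  fixes D E :: "'a::comm_ring_1 fps"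
  assumes "int_fps D" "int_fps E"
  shows "fps_cong 4 ((1 - 2 * D) * (1 - 2 * E)) (1 - 2 * (D + E))"
  using assms by (intro fps_congI[of "D * E"]) (simp_all add: algebra_simps numeral_fps_const)

lemma fps_cong_square_one_minus_two:
  fixes D :: "'a::comm_ring_1 fps"
  assumes "int_fps D"
  shows "fps_cong 4 ((1 - 2 * D) * (1 - 2 * D)) 1"
  using assms by (intro fps_congI[of "D * D - D"]) (simp_all add: algebra_simps numeral_fps_const)

lemma fps_cong_prod_one_minus_two:
  fixes f :: "'b \<Rightarrow> 'a::comm_ring_1 fps"
  assumes "finite S" "\<And>x. x \<in> S \<Longrightarrow> int_fps (f x)"
  shows "fps_cong 4 (\<Prod>x\<in>S. 1 - 2 * f x) (1 - 2 * (\<Sum>x\<in>S. f x))"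
  using assms
proof (induction S rule: finite_induct)
  case (insert a S)
  then have "fps_cong 4 ((1 - 2 * f a) * (\<Prod>x\<in>S. 1 - 2 * f x))
      ((1 - 2 * f a) * (1 - 2 * (\<Sum>x\<in>S. f x)))"
    by (intro fps_cong_mult_left) simp_all
  also have "fps_cong 4 \<dots> (1 - 2 * (f a + (\<Sum>x\<in>S. f x)))"
    using insert.prems by (intro fps_cong_mult_one_minus_two) (simp_all add: int_fps_sum)
  finally show ?case using insert.hyps by simp
qed simp

lemma fps_compose_X_power_nth:
  assumes "k \<ge> 1"
  shows "fps_nth (A oo fps_X ^ k) n = (if k dvd n then fps_nth A (n div k) else 0)"
proof -
  have "fps_nth (A oo fps_X ^ k) n = (\<Sum>i=0..n. if n = k * i then fps_nth A i else 0)"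
    by (simp add: fps_compose_nth flip: power_mult) (rule sum.cong; simp)
  also have "\<dots> = (if k dvd n then fps_nth A (n div k) else 0)"
  proof (cases "k dvd n")
    case True
    then obtain j where j: "n = k * j" ..
    with assms have "j \<le> n" "n div k = j" "\<And>i. n = k * i \<longleftrightarrow> i = j" by auto
    then show ?thesis using True by (simp cong: if_cong)
  next
    case False
    then have "n \<noteq> k * i" for i by auto
    then show ?thesis using False by simp
  qed
  finally show ?thesis .
qed

lemma int_fps_compose_X_power: "k \<ge> 1 \<Longrightarrow> int_fps A \<Longrightarrow> int_fps (A oo fps_X ^ k)"
  by (simp add: int_fps_def fps_compose_X_power_nth)

lemma fps_cong_compose_X_power:
  fixes A B :: "'a::comm_ring_1 fps"
  assumes "k \<ge> 1" "fps_cong m A B"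
  shows "fps_cong m (A oo fps_X ^ k) (B oo fps_X ^ k)"
proof -
  obtain Y where "int_fps Y" "A - B = fps_const m * Y"
    using assms(2) by (auto simp: fps_cong_def)
  then show ?thesis
    using assms(1) by (intro fps_congI[of "Y oo fps_X ^ k"])
      (simp_all add: int_fps_compose_X_power fps_const_mult_apply_left flip: fps_compose_sub_distrib)
qed

definition eta_partial :: "nat \<Rightarrow> nat \<Rightarrow> 'a::comm_ring_1 fps" where
  "eta_partial k N = (\<Prod>m\<in>{1..N}. 1 - fps_X ^ (k * m))"

lemma eta_partial_nth_stable:
  assumes "k \<ge> 1" "n \<le> N"
  shows "fps_nth (eta_partial k N) n = fps_nth (eta_partial k n) n"
  using assms(2)
proof (induction N rule: dec_induct)
  case (step M)
  have "n < k * Suc M"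
    using mult_le_mono1[OF assms(1), of "Suc M"] step.hyps(1) by simp
  then show ?case
    using step.IH by (simp add: eta_partial_def right_diff_distrib
        fps_X_power_mult_right_nth)
qed simp

lemma fps_agree_upto_eta_f:
  assumes "k \<ge> 1"
  shows "fps_agree_upto n (eta_f k) (eta_partial k n)"
  using eta_partial_nth_stable[OF assms, symmetric]
  by (auto simp: fps_agree_upto_def eta_f_def eta_partial_def)

lemma int_fps_eta_f: "int_fps (eta_f k)"
proof -
  have "int_fps (eta_partial k n :: rat fps)" for n
    unfolding eta_partial_def by (intro int_fps_prod) simp
  then show ?thesis by (auto simp: int_fps_def eta_f_def eta_partial_def)
qed

lemma eta_f_nth_0 [simp]: "fps_nth (eta_f k) 0 = 1"
  by (simp add: eta_f_def)

lemma eta_partial_compose_X_power: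
  assumes "j \<ge> 1"
  shows "eta_partial k N oo fps_X ^ j = (eta_partial (j * k) N :: 'a::idom fps)"
proof -
  have X: "fps_nth (fps_X ^ j :: 'a fps) 0 = 0" using assms by simp
  show ?thesis
    by (simp add: eta_partial_def fps_compose_prod_distrib[OF X] fps_compose_sub_distrib
        fps_X_power_compose[OF X] mult.assoc flip: power_mult)
qed

lemma eta_f_compose_X_power:
  assumes "k \<ge> 1" "j \<ge> 1"
  shows "eta_f k oo fps_X ^ j = eta_f (j * k)"
proof (rule fps_ext)
  fix n
  have "fps_nth (eta_f k oo fps_X ^ j) n = fps_nth (eta_partial k n oo fps_X ^ j) n"
    using assms fps_agree_upto_eta_f[OF assms(1), of n]
    by (auto simp: fps_compose_X_power_nth fps_agree_upto_def)
  also have "\<dots> = fps_nth (eta_f (j * k)) n"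
    using assms fps_agree_upto_eta_f[of "j * k" n]
    by (simp add: eta_partial_compose_X_power[OF assms(2)] fps_agree_upto_def)
  finally show "fps_nth (eta_f k oo fps_X ^ j) n = fps_nth (eta_f (j * k)) n" .
qed

section \<open>Squares of the Euler products modulo 4\<close>

definition multiples_fps :: "nat \<Rightarrow> 'a::comm_ring_1 fps" where
  "multiples_fps m = Abs_fps (\<lambda>n. if 0 < n \<and> m dvd n then 1 else 0)"

definition divisor_count :: "nat \<Rightarrow> nat" where
  "divisor_count n = card {d. d dvd n}"

text \<open>The constant coefficient is 0: every number divides 0, and \<^const>\<open>card\<close> of an infinite
  set is 0.\<close>
definition divisor_fps :: "'a::comm_ring_1 fps" where
  "divisor_fps = Abs_fps (\<lambda>n. of_nat (divisor_count n))"

lemma int_fps_multiples_fps [simp]: "int_fps (multiples_fps m)"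
  by (simp add: int_fps_def multiples_fps_def)

lemma int_fps_divisor_fps [simp]: "int_fps divisor_fps"
  by (simp add: int_fps_def divisor_fps_def)

lemma one_minus_X_power_mult_multiples_fps:
  assumes "m \<ge> 1"
  shows "(1 - fps_X ^ m) * multiples_fps m = fps_X ^ m"
proof (rule fps_ext)
  fix n
  have "m dvd n - m \<longleftrightarrow> m dvd n" if "m \<le> n"
    using that by (simp add: dvd_minus_self)
  then show "fps_nth ((1 - fps_X ^ m) * multiples_fps m) n = fps_nth (fps_X ^ m) n"
    using assms by (auto simp: left_diff_distrib fps_X_power_mult_nth multiples_fps_def
        dest: dvd_imp_le)
qed

lemma one_minus_X_power_square_cong:
  assumes "m \<ge> 1"
  shows "fps_cong 4 ((1 - fps_X ^ m) ^ 2)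
    ((1 - fps_X ^ (2 * m)) * (1 - 2 * multiples_fps m) :: 'a::comm_ring_1 fps)"
proof -
  define x :: "'a fps" where "x = fps_X ^ m"
  define M :: "'a fps" where "M = multiples_fps m"
  have "fps_X ^ (2 * m) = x * x"
    unfolding x_def mult_2 power_add ..
  moreover have "(1 - x * x) * (1 - 2 * M) = (1 - x * x) - 2 * (1 + x) * ((1 - x) * M)"
    by (simp add: algebra_simps)
  moreover have "(1 - x) * M = x"
    using one_minus_X_power_mult_multiples_fps[OF assms] by (simp add: x_def M_def)
  moreover have "(1 - x) ^ 2 - ((1 - x * x) - 2 * (1 + x) * x) = fps_const 4 * (x * x)"
    by (simp add: algebra_simps power2_eq_square numeral_fps_const)
  moreover have "int_fps x" by (simp add: x_def)
  ultimately show ?thesis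
    unfolding x_def[symmetric] M_def[symmetric] by (intro fps_congI) simp_all
qed

lemma eta_partial_square_cong:
  "fps_cong 4 (eta_partial 1 N ^ 2)
    (eta_partial 2 N * (1 - 2 * (\<Sum>m\<in>{1..N}. multiples_fps m)) :: 'a::comm_ring_1 fps)"
proof -
  have "eta_partial 1 N ^ 2 = (\<Prod>m\<in>{1..N}. (1 - fps_X ^ m :: 'a fps) ^ 2)"
    by (simp add: eta_partial_def prod_power_distrib)
  also have "fps_cong 4 \<dots> (\<Prod>m\<in>{1..N}. (1 - fps_X ^ (2 * m)) * (1 - 2 * multiples_fps m))"
    by (intro fps_cong_prod one_minus_X_power_square_cong) auto
  also have "\<dots> = eta_partial 2 N * (\<Prod>m\<in>{1..N}. 1 - 2 * multiples_fps m)"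
    by (simp add: eta_partial_def prod.distrib)
  also have "fps_cong 4 \<dots> (eta_partial 2 N * (1 - 2 * (\<Sum>m\<in>{1..N}. multiples_fps m)))"
    by (intro fps_cong_mult_left fps_cong_prod_one_minus_two)
      (auto simp: eta_partial_def intro!: int_fps_prod)
  finally show ?thesis .
qed

lemma fps_agree_upto_divisor_fps:
  "fps_agree_upto N divisor_fps (\<Sum>m\<in>{1..N}. multiples_fps m)"
  unfolding fps_agree_upto_def
proof (intro allI impI)
  fix n assume "n \<le> N"
  have "{d. d dvd n} = {1..N} \<inter> {m. 0 < n \<and> m dvd n}" if "n > 0"
  proof -
    have "1 \<le> d \<and> d \<le> N" if "d dvd n" for d
      using \<open>n > 0\<close> \<open>n \<le> N\<close> that dvd_imp_le[OF that] by (cases "d = 0") auto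
    then show ?thesis using that by auto
  qed
  moreover have "infinite {d. d dvd (0::nat)}" by simp
  ultimately show "fps_nth divisor_fps n = fps_nth (\<Sum>m\<in>{1..N}. multiples_fps m) n"
    by (cases "n = 0") (simp_all add: divisor_fps_def divisor_count_def multiples_fps_def
        fps_sum_nth sum.If_cases)
qed

lemma eta_f_1_square_cong: "fps_cong 4 (eta_f 1 ^ 2) (eta_f 2 * (1 - 2 * divisor_fps))"
proof (rule fps_cong_if_truncations_cong)
  fix n
  have "fps_agree_upto n (eta_f 1 ^ 2) (eta_partial 1 n ^ 2)"
    by (intro fps_agree_upto_power fps_agree_upto_eta_f) simp
  moreover have "fps_agree_upto n (eta_f 2 * (1 - 2 * divisor_fps))
      (eta_partial 2 n * (1 - 2 * (\<Sum>m\<in>{1..n}. multiples_fps m)))"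
    by (intro fps_agree_upto_mult fps_agree_upto_diff fps_agree_upto_eta_f
        fps_agree_upto_divisor_fps) simp_all
  ultimately show "\<exists>A' B'. fps_agree_upto n (eta_f 1 ^ 2) A' \<and>
      fps_agree_upto n (eta_f 2 * (1 - 2 * divisor_fps)) B' \<and> fps_cong 4 A' B'"
    using eta_partial_square_cong by blast
qed

lemma eta_f_square_cong:
  assumes "k \<ge> 1"
  shows "fps_cong 4 (eta_f k ^ 2) (eta_f (2 * k) * (1 - 2 * (divisor_fps oo fps_X ^ k)))"
proof -
  have Xk: "fps_nth (fps_X ^ k :: rat fps) 0 = 0" using assms by simp
  have "fps_cong 4 (eta_f 1 ^ 2 oo fps_X ^ k) (eta_f 2 * (1 - 2 * divisor_fps) oo fps_X ^ k)"
    by (rule fps_cong_compose_X_power[OF assms eta_f_1_square_cong])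
  moreover have "eta_f 1 ^ 2 oo fps_X ^ k = eta_f k ^ 2"
    using fps_compose_power[OF Xk, of "eta_f 1" 2] eta_f_compose_X_power[of 1 k] assms by simp
  moreover have "eta_f 2 * (1 - 2 * divisor_fps) oo fps_X ^ k
      = eta_f (2 * k) * (1 - 2 * (divisor_fps oo fps_X ^ k))"
    unfolding fps_compose_mult_distrib[OF Xk] fps_compose_sub_distrib
    using eta_f_compose_X_power[of 2 k] assms by (simp add: mult.commute)
  ultimately show ?thesis by simp
qed

lemma overcubic_denominator_cong:
  fixes a :: nat
  defines "\<phi> \<equiv> 1 - 2 * divisor_fps" and "\<psi> \<equiv> 1 - 2 * (divisor_fps oo fps_X ^ 2)"
  shows "fps_cong 4 (eta_f 1 ^ 2 * eta_f 2 ^ (4 * a + 1)) (eta_f 4 ^ (2 * a + 1) * (\<phi> * \<psi>))"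
proof -
  have int: "int_fps \<phi>" "int_fps \<psi>" "int_fps (eta_f k)" for k
    by (simp_all add: \<phi>_def \<psi>_def int_fps_compose_X_power int_fps_eta_f)
  have \<psi>_square: "fps_cong 4 (\<psi> * \<psi>) 1"
    unfolding \<psi>_def by (intro fps_cong_square_one_minus_two) (simp add: int_fps_compose_X_power)
  have "eta_f 1 ^ 2 * eta_f 2 ^ (4 * a + 1) = eta_f 1 ^ 2 * eta_f 2 * (eta_f 2 ^ 2) ^ (2 * a)"
    by (simp add: ac_simps flip: power_mult)
  also have "fps_cong 4 \<dots> (eta_f 2 * \<phi> * eta_f 2 * (eta_f 4 * \<psi>) ^ (2 * a))"
    using eta_f_1_square_cong eta_f_square_cong[of 2] int
    by (intro fps_cong_mult fps_cong_power) (simp_all flip: \<phi>_def \<psi>_def)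
  also have "\<dots> = eta_f 2 ^ 2 * (\<phi> * eta_f 4 ^ (2 * a)) * (\<psi> * \<psi>) ^ a"
    unfolding power_mult_distrib power_mult power2_eq_square by (simp only: ac_simps)
  also have "fps_cong 4 \<dots> (eta_f 2 ^ 2 * (\<phi> * eta_f 4 ^ (2 * a)) * 1 ^ a)"
    by (rule fps_cong_mult_left[OF _ fps_cong_power[OF \<psi>_square]]) (use int in simp_all)
  also have "fps_cong 4 \<dots> (eta_f 4 * \<psi> * (\<phi> * eta_f 4 ^ (2 * a)))"
    by (simp, rule fps_cong_mult[OF _ fps_cong_refl])
      (use eta_f_square_cong[of 2] int in \<open>simp_all flip: \<psi>_def\<close>)
  also have "\<dots> = eta_f 4 ^ (2 * a + 1) * (\<phi> * \<psi>)"
    by (simp add: ac_simps)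
  finally show ?thesis .
qed

lemma overcubic_gf_even_cong:
  assumes "i \<ge> 1"
  shows "fps_cong 4 (overcubic_gf (2 * i)) (1 - 2 * (divisor_fps + (divisor_fps oo fps_X ^ 2)))"
proof -
  define a where "a = i - 1"
  define \<phi> :: "rat fps" where "\<phi> = 1 - 2 * divisor_fps"
  define \<psi> :: "rat fps" where "\<psi> = 1 - 2 * (divisor_fps oo fps_X ^ 2)"
  define F where "F = eta_f 4 ^ (2 * a + 1)"
  have int: "int_fps \<phi>" "int_fps \<psi>" "int_fps F"
    by (simp_all add: \<phi>_def \<psi>_def F_def int_fps_compose_X_power int_fps_eta_f)
  have nth_0: "fps_nth \<phi> 0 = 1" "fps_nth \<psi> 0 = 1" "fps_nth F 0 = 1"
    by (simp_all add: \<phi>_def \<psi>_def F_def divisor_fps_def divisor_count_def fps_nth_power_0)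
  have "overcubic_gf (2 * i) = F * inverse (eta_f 1 ^ 2 * eta_f 2 ^ (4 * a + 1))"
  proof -
    have e: "2 * i - 1 = 2 * a + 1" "2 * (2 * i) - 3 = 4 * a + 1"
      using assms by (simp_all add: a_def)
    show ?thesis unfolding overcubic_gf_def F_def e using assms by simp
  qed
  also have "fps_cong 4 \<dots> (F * inverse (F * (\<phi> * \<psi>)))"
    using overcubic_denominator_cong[of a] int nth_0
    by (intro fps_cong_mult_left fps_cong_inverse)
      (simp_all add: F_def \<phi>_def \<psi>_def int_fps_eta_f fps_nth_power_0)
  also have "\<dots> = inverse (\<phi> * \<psi>)"
    using nth_0 by (simp add: fps_inverse_mult inverse_mult_eq_1' flip: mult.assoc)
  also have "fps_cong 4 \<dots> (\<phi> * \<psi>)"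
  proof (rule fps_cong_inverse_self)
    have "fps_cong 4 ((\<phi> * \<phi>) * (\<psi> * \<psi>)) (1 * 1)"
      unfolding \<phi>_def \<psi>_def
      by (intro fps_cong_mult fps_cong_square_one_minus_two) (simp_all add: int_fps_compose_X_power)
    then show "fps_cong 4 (\<phi> * \<psi> * (\<phi> * \<psi>)) 1" by (simp add: ac_simps)
  qed (use int nth_0 in simp_all)
  also have "fps_cong 4 \<dots> (1 - 2 * (divisor_fps + (divisor_fps oo fps_X ^ 2)))"
    unfolding \<phi>_def \<psi>_def
    by (intro fps_cong_mult_one_minus_two) (simp_all add: int_fps_compose_X_power)
  finally show ?thesis .
qed

lemma abar_even_cong:
  assumes "i \<ge> 1" "N > 0"
  shows "\<exists>z\<in>\<int>. abar (2 * i) N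
    = 4 * z - 2 * of_nat (divisor_count N + (if even N then divisor_count (N div 2) else 0))"
proof -
  obtain z where "z \<in> \<int>" and z: "abar (2 * i) N
      = fps_nth (1 - 2 * (divisor_fps + (divisor_fps oo fps_X ^ 2))) N + 4 * z"
    using fps_cong_nth[OF overcubic_gf_even_cong[OF assms(1)], of N] unfolding abar_def
    by (auto simp: algebra_simps)
  moreover have "fps_nth (1 - 2 * (divisor_fps + (divisor_fps oo fps_X ^ 2)) :: rat fps) N
      = - 2 * of_nat (divisor_count N + (if even N then divisor_count (N div 2) else 0))"
    using assms(2) by (simp add: fps_compose_X_power_nth divisor_fps_def numeral_fps_const)
  ultimately show ?thesis by (intro bexI[of _ z]) simp_all
qed

section \<open>Parity of the divisor function\<close>

lemma even_card_iff_even_card_fixed_points: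
  assumes "finite S" "\<And>x. x \<in> S \<Longrightarrow> f x \<in> S" "\<And>x. x \<in> S \<Longrightarrow> f (f x) = x"
  shows "even (card S) \<longleftrightarrow> even (card {x\<in>S. f x = x})"
  using assms
proof (induction S rule: finite_psubset_induct)
  case (psubset S)
  show ?case
  proof (cases "\<exists>x\<in>S. f x \<noteq> x")
    case True
    then obtain x where x: "x \<in> S" "f x \<noteq> x" by blast
    define T where "T = S - {x, f x}"
    have "f y \<in> T" if "y \<in> T" for y
    proof -
      have y: "y \<in> S" "y \<noteq> x" "y \<noteq> f x" using that by (auto simp: T_def)
      have "f y \<noteq> x" using psubset.prems(2)[OF y(1)] y(3) by auto
      moreover have "f y \<noteq> f x" using psubset.prems(2) x(1) y by metis
      ultimately show ?thesis using psubset.prems(1) y(1) by (simp add: T_def)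
    qed
    moreover have "T \<subset> S" using x by (auto simp: T_def)
    ultimately have "even (card T) \<longleftrightarrow> even (card {y\<in>T. f y = y})"
      using psubset.prems by (intro psubset.IH) auto
    moreover have "card T = card S - 2" "card S \<ge> 2"
      using x psubset.hyps psubset.prems(1) card_mono[of S "{x, f x}"]
      by (simp_all add: T_def card_Diff_subset)
    moreover have "{y\<in>T. f y = y} = {y\<in>S. f y = y}"
      using x psubset.prems(2) by (auto simp: T_def)
    ultimately show ?thesis by auto
  next
    case False
    then have "{x\<in>S. f x = x} = S" by auto
    then show ?thesis by simp
  qed
qed

lemma odd_divisor_count_iff:
  assumes "n > 0"
  shows "odd (divisor_count n) \<longleftrightarrow> (\<exists>k. n = k ^ 2)"
proof -
  have "even (divisor_count n) \<longleftrightarrow> even (card {d\<in>{d. d dvd n}. n div d = d})"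
    unfolding divisor_count_def using assms
    by (intro even_card_iff_even_card_fixed_points) (auto simp: div_div_eq_right)
  moreover have "{d\<in>{d. d dvd n}. n div d = d} = {d. n = d ^ 2}"
    by (auto simp: power2_eq_square) (metis dvd_mult_div_cancel)
  moreover have "card {d. n = d ^ 2} = (if \<exists>k. n = k ^ 2 then 1 else 0)"
  proof (cases "\<exists>k. n = k ^ 2")
    case True
    then obtain k where "n = k ^ 2" ..
    then have "{d. n = d ^ 2} = {k}" by auto
    then show ?thesis using True by simp
  qed simp
  ultimately show ?thesis by auto
qed

lemma pow2_mult_3_mod_4_not_square: "2 ^ a * (4 * n + 3) \<noteq> (k::nat) ^ 2"
proof (induction a arbitrary: k rule: less_induct)
  case (less a)
  show ?case
  proof
    assume k: "2 ^ a * (4 * n + 3) = k ^ 2"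
    consider "a = 0" | "a = 1" | b where "a = Suc (Suc b)"
      by (metis One_nat_def not0_implies_Suc)
    then show False
    proof cases
      case 1
      then have "odd (k ^ 2)" by (simp flip: k)
      then obtain j where "k = 2 * j + 1" by (auto elim: oddE)
      then have "4 * n + 3 = 4 * (j * j + j) + 1" using k 1 by (simp add: power2_eq_square algebra_simps)
      then show False by presburger
    next
      case 2
      then have "even (k ^ 2)" by (simp flip: k)
      then obtain j where "k = 2 * j" by (auto elim: evenE)
      then have "4 * n + 3 = 2 * (j * j)" using k 2 by (simp add: power2_eq_square)
      then show False by presburger
    next
      case 3
      then have "even (k ^ 2)" by (simp flip: k)
      then obtain j where "k = 2 * j" by (auto elim: evenE)
      then have "2 ^ b * (4 * n + 3) = j ^ 2" using k 3 by (simp add: power2_eq_square)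
      then show False using less.IH[of b j] 3 by simp
    qed
  qed
qed

lemma even_divisor_count_pow2_mult_3_mod_4: "even (divisor_count (2 ^ a * (4 * n + 3)))"
  using odd_divisor_count_iff[of "2 ^ a * (4 * n + 3)"] pow2_mult_3_mod_4_not_square by auto

theorem theorem1p6:
  fixes n i \<alpha> :: nat
  assumes "i \<ge> 1"
  shows "\<exists>m::int. abar (2 * i) (2 ^ \<alpha> * (4 * n + 3)) = 4 * of_int m"
proof -
  define N where "N = 2 ^ \<alpha> * (4 * n + 3)"
  have "N > 0" by (simp add: N_def)
  have "even (divisor_count N)"
    by (simp add: N_def even_divisor_count_pow2_mult_3_mod_4)
  moreover have "even (divisor_count (N div 2))" if "even N"
  proof -
    have "\<alpha> \<noteq> 0"
    proof
      assume "\<alpha> = 0"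
      then have "N = 4 * n + 3" by (simp add: N_def)
      with that show False by presburger
    qed
    then obtain \<beta> where "\<alpha> = Suc \<beta>" using not0_implies_Suc by blast
    then have "N div 2 = 2 ^ \<beta> * (4 * n + 3)" by (simp add: N_def)
    then show ?thesis by (simp add: even_divisor_count_pow2_mult_3_mod_4)
  qed
  ultimately have "even (divisor_count N + (if even N then divisor_count (N div 2) else 0))"
    by simp
  then obtain w where w: "divisor_count N + (if even N then divisor_count (N div 2) else 0) = 2 * w" ..
  obtain z where "z \<in> \<int>" "abar (2 * i) N = 4 * z - 2 * of_nat (2 * w)"
    using abar_even_cong[OF assms \<open>N > 0\<close>] unfolding w by blast
  then have "abar (2 * i) N = 4 * (z - of_nat w)" by simp
  moreover have "z - of_nat w \<in> \<int>" using \<open>z \<in> \<int>\<close> by simp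
  ultimately show ?thesis unfolding N_def by (metis Ints_cases)
qed

end
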